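(* Let $n\ge 1$ and let $h\in\mathrm{PR}\cap\mathscr{A}_0$. Then for any $p_1,\ldots,p_n\in\mathcal{P}_h$ and any $L\in\mathcal{L}$, the feedback interconnection $$y_i(s)=p_i(s)\big(e_i(s)-u_i(s)\big),\ i=1,\dots,n,\qquad u(s)=\tfrac{1}{s}L\,y(s)$$ is stable, i.e. $$\begin{bmatrix}P(s)\\ I\end{bmatrix}\Big(I+\tfrac{1}{s}L P(s)\Big)^{-1}\begin{bmatrix}\tfrac{1}{s}L & I\end{bmatrix}\in\mathscr{H}_\infty^{2n\times 2n},\qquad P(s)=\operatorname{diag}(p_1(s),\dots,p_n(s)).$$
   Context: $\mathscr{H}_\infty$ denotes the space of (scalar or matrix) functions analytic and bounded on the open right half plane $\mathbb{C}_+=\{s:\mathrm{Re}(s)>0\}$, with norm $\|g\|_\infty=\sup_{s\in\mathbb{C}_+}|g(s)|$. $\mathscr{A}_0$ denotes the subset of $\mathscr{H}_\infty$ consisting of functions that extend continuously to the extended imaginary axis $j\mathbb{R}\cup\{\infty\}$. A (not necessarily proper or rational) transfer function $g$ is positive real ($g\in\mathrm{PR}$) if (i) $g$ is analytic in $\mathrm{Re}(s)>0$; (ii) $g(s)$ is real for all positive real $s$; (iii) $\mathrm{Re}(g(s))\ge 0$ for all $\mathrm{Re}(s)>0$. $g$ is extended strictly positive real ($g\in\mathrm{ESPR}$) if in addition $g\in\mathscr{A}_0$ and there exists $\epsilon>0$ such that $g(s)-\epsilon$ is PR. For $h$ given, $\mathcal{P}_h:=\{p\in\mathscr{H}_\infty:\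 p(0)\neq 0,\ h(s)(1+p(s)/s)\in\mathrm{ESPR}\}$ (here $p(0)$ denotes the boundary value at $s=0$). $\mathcal{L}:=\{L\in\mathbb{R}^{n\times n}: L=L^T,\ 0\preceq L\preceq I\}$. *)

theory Defs
  imports "HOL-Analysis.Analysis"
begin

definition RHP :: "complex set" where
  "RHP = {s. Re s > 0}"

definition Hinf :: "(complex \<Rightarrow> complex) \<Rightarrow> bool" where
  "Hinf g \<longleftrightarrow> g holomorphic_on RHP \<and> bounded (g ` RHP)"

definition Hinf_mat :: "(complex \<Rightarrow> complex^'m^'k) \<Rightarrow> bool" where
  "Hinf_mat G \<longleftrightarrow> (\<forall>i j. Hinf (\<lambda>s. G s $ i $ j))"

text \<open>A0: H-infinity functions extending continuously to the extended imaginary axis.\<close>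
definition A0 :: "(complex \<Rightarrow> complex) \<Rightarrow> bool" where
  "A0 g \<longleftrightarrow> Hinf g \<and>
     (\<exists>g'. continuous_on {s. Re s \<ge> 0} g' \<and> (\<forall>s\<in>RHP. g' s = g s) \<and>
           (\<exists>l. (g' \<longlongrightarrow> l) (inf at_infinity (principal {s. Re s \<ge> 0}))))"

definition PR :: "(complex \<Rightarrow> complex) \<Rightarrow> bool" where
  "PR g \<longleftrightarrow> g holomorphic_on RHP \<and>
     (\<forall>x::real. x > 0 \<longrightarrow> g (complex_of_real x) \<in> \<real>) \<and>
     (\<forall>s\<in>RHP. Re (g s) \<ge> 0)"

definition ESPR :: "(complex \<Rightarrow> complex) \<Rightarrow> bool" where
  "ESPR g \<longleftrightarrow> PR g \<and> A0 g \<and> (\<exists>\<epsilon>>0. PR (\<lambda>s. g s - complex_of_real \<epsilon>))"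

text \<open>The class P_h; p(0) is the boundary value at 0, i.e. the limit of p(s) as s tends to 0
  within the open right half plane (required to exist and be nonzero).\<close>
definition Pclass :: "(complex \<Rightarrow> complex) \<Rightarrow> (complex \<Rightarrow> complex) \<Rightarrow> bool" where
  "Pclass h p \<longleftrightarrow> Hinf p \<and>
     (\<exists>c. c \<noteq> 0 \<and> (p \<longlongrightarrow> c) (at 0 within RHP)) \<and>
     ESPR (\<lambda>s. h s * (1 + p s / s))"

definition Lset :: "(real^'n^'n) set" where
  "Lset = {L. transpose L = L \<and>
              (\<forall>x. 0 \<le> x \<bullet> (L *v x) \<and> x \<bullet> (L *v x) \<le> x \<bullet> x)}"

definition diagP :: "('n \<Rightarrow> complex \<Rightarrow> complex) \<Rightarrow> complex \<Rightarrow> complex^'n^'n" where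
  "diagP p s = (\<chi> i j. if i = j then p i s else 0)"

definition Lc_over_s :: "real^'n^'n \<Rightarrow> complex \<Rightarrow> complex^'n^'n" where
  "Lc_over_s L s = (\<chi> i j. complex_of_real (L $ i $ j) / s)"

definition retdiff :: "real^'n^'n \<Rightarrow> ('n \<Rightarrow> complex \<Rightarrow> complex) \<Rightarrow> complex \<Rightarrow> complex^'n^'n" where
  "retdiff L p s = mat 1 + Lc_over_s L s ** diagP p s"

text \<open>Closed-loop map [P; I] (I + (1/s) L P)^{-1} [(1/s) L, I], a 2n x 2n matrix
  indexed by 'n + 'n (Inl = first block, Inr = second block).\<close>
definition closed_loop :: "real^'n^'n \<Rightarrow> ('n \<Rightarrow> complex \<Rightarrow> complex) \<Rightarrow> complex \<Rightarrow> complex^('n+'n)^('n+'n)" where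
  "closed_loop L p s =
     (\<chi> k j. case k of Inl i \<Rightarrow> diagP p s $ i $ j | Inr i \<Rightarrow> (mat 1 :: complex^'n^'n) $ i $ j)
     ** matrix_inv (retdiff L p s)
     ** (\<chi> i k. case k of Inl j \<Rightarrow> Lc_over_s L s $ i $ j | Inr j \<Rightarrow> (mat 1 :: complex^'n^'n) $ i $ j)"

end

theory Submission
  imports Defs
begin

text \<open>For \<open>Re s > 0\<close> the loop equation \<open>R(s) x = L a / s + b\<close>, \<open>R = I + L P / s\<close>, reads
  \<open>s (x - b) = L w\<close> with \<open>w = a - P x\<close>. Pairing it with \<open>x\<close> and weighting by \<open>h(s)\<close> gives
  \<open>\<Sum>\<^sub>i h (1 + p\<^sub>i/s) |x\<^sub>i|\<^sup>2\<close> as a sum of terms bilinear in \<open>x\<close> and \<open>(a, b)\<close> plus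
  \<open>h (\<langle>z, z\<rangle> - \<langle>z, w\<rangle>) / |s|\<^sup>2\<close> with \<open>z = L w\<close>, whose real part is \<open>\<le> 0\<close> because
  \<open>0 \<preceq> L \<preceq> I\<close> implies \<open>L\<^sup>2 \<preceq> L\<close>. The ESPR margin bounds the left side below by
  \<open>\<epsilon> |x|\<^sup>2\<close>, and \<open>h\<close>, \<open>h/s\<close>, \<open>p\<^sub>i\<close> are bounded on the half plane, so
  \<open>|x| \<le> C (|a| + |b|)\<close> uniformly in \<open>s\<close>. This gives invertibility of \<open>R(s)\<close> and uniform
  bounds on the closed-loop entries, which are holomorphic by Cramer's rule.\<close>

section \<open>Symmetric matrices between 0 and I\<close>

lemma psd_form_symmetric:
  fixes L :: "real^'n^'n"
  assumes "transpose L = L"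
  shows "u \<bullet> (L *v v) = v \<bullet> (L *v u)"
  by (metis dot_lmul_matrix inner_commute assms vector_transpose_matrix)

lemma psd_form_cauchy_schwarz:
  fixes L :: "real^'n^'n"
  assumes sym: "transpose L = L" and psd: "\<And>x. 0 \<le> x \<bullet> (L *v x)"
  shows "(x \<bullet> (L *v z))^2 \<le> (x \<bullet> (L *v x)) * (z \<bullet> (L *v z))"
proof -
  let ?A = "x \<bullet> (L *v x)" and ?B = "x \<bullet> (L *v z)" and ?C = "z \<bullet> (L *v z)"
  have quadratic_nonneg: "0 \<le> ?A + 2*t*?B + t^2 * ?C" for t :: real
  proof -
    have "0 \<le> (x + t *\<^sub>R z) \<bullet> (L *v (x + t *\<^sub>R z))" by (rule psd)
    also have "\<dots> = ?A + 2*t*?B + t^2 * ?C"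
      using psd_form_symmetric[OF sym, of z x]
      by (simp add: matrix_vector_right_distrib inner_add_left inner_add_right
          matrix_vector_mult_scaleR algebra_simps power2_eq_square)
    finally show ?thesis .
  qed
  show ?thesis
  proof (cases "?C = 0")
    case True
    have "?B = 0"
    proof (rule ccontr)
      assume "?B \<noteq> 0"
      then have "?A + 2*(-(?A+1)/(2*?B))*?B = -1" by (simp add: field_simps)
      with quadratic_nonneg[of "-(?A+1)/(2*?B)"] True show False by simp
    qed
    with True show ?thesis by simp
  next
    case False
    then have C_pos: "?C > 0" using psd[of z] by linarith
    have "0 \<le> ?A + 2*(-?B/?C)*?B + (-?B/?C)^2 * ?C" by (rule quadratic_nonneg)
    also have "\<dots> = ?A - ?B^2/?C" using C_pos by (simp add: field_simps power2_eq_square)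
    finally show ?thesis using C_pos by (simp add: field_simps mult.commute)
  qed
qed

lemma Lset_square_le:
  fixes L :: "real^'n^'n"
  assumes "L \<in> Lset"
  shows "(L *v u) \<bullet> (L *v u) \<le> u \<bullet> (L *v u)"
proof -
  have sym: "transpose L = L" and psd: "\<And>x. 0 \<le> x \<bullet> (L *v x)"
    and le_id: "\<And>x. x \<bullet> (L *v x) \<le> x \<bullet> x"
    using assms by (auto simp: Lset_def)
  let ?z = "L *v u"
  have "u \<bullet> (L *v ?z) = ?z \<bullet> ?z"
    using psd_form_symmetric[OF sym, of u ?z] by (simp add: inner_commute)
  then have "(?z \<bullet> ?z)^2 \<le> (u \<bullet> (L *v u)) * (?z \<bullet> (L *v ?z))"
    using psd_form_cauchy_schwarz[OF sym psd, of u ?z] by simp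
  also have "\<dots> \<le> (u \<bullet> (L *v u)) * (?z \<bullet> ?z)"
    by (rule mult_left_mono[OF le_id psd])
  finally have "(?z \<bullet> ?z) * (?z \<bullet> ?z) \<le> (u \<bullet> (L *v u)) * (?z \<bullet> ?z)"
    by (simp add: power2_eq_square)
  then show ?thesis
    using psd[of u] by (cases "?z \<bullet> ?z = 0") (simp_all add: inner_gt_zero_iff)
qed

definition cinner :: "complex^'n \<Rightarrow> complex^'n \<Rightarrow> complex" where
  "cinner u v = (\<Sum>i\<in>UNIV. cnj (u$i) * v$i)"

lemma sum_norm_mult_le_norm_mult:
  "(\<Sum>i\<in>UNIV. norm (u$i) * norm (v$i)) \<le> norm (u::'a::real_normed_vector^'n) * norm v"
  using L2_set_mult_ineq[of "\<lambda>i. norm (u$i)" "\<lambda>i. norm (v$i)" UNIV]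
  by (simp add: norm_vec_def)

lemma norm_cinner_le: "cmod (cinner u v) \<le> norm u * norm v"
proof -
  have "cmod (cinner u v) \<le> (\<Sum>i\<in>UNIV. cmod (u$i) * cmod (v$i))"
    unfolding cinner_def by (rule order_trans[OF norm_sum]) (simp add: norm_mult)
  also have "\<dots> \<le> norm u * norm v" by (rule sum_norm_mult_le_norm_mult)
  finally show ?thesis .
qed

definition cmatrix :: "real^'n^'m \<Rightarrow> complex^'n^'m" where
  "cmatrix L = (\<chi> i j. complex_of_real (L$i$j))"

text \<open>With \<open>z = L w\<close>, \<open>\<langle>z, z\<rangle> - \<langle>z, w\<rangle>\<close> splits into the real and imaginary parts of \<open>w\<close>,
  on each of which it equals \<open>|Lu|\<^sup>2 - \<langle>Lu, u\<rangle> \<le> 0\<close>.\<close>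

lemma cinner_Lset_real_nonpos:
  fixes L :: "real^'n^'n" and w :: "complex^'n"
  assumes "L \<in> Lset"
  defines "z \<equiv> cmatrix L *v w"
  shows "Im (cinner z z - cinner z w) = 0 \<and> Re (cinner z z - cinner z w) \<le> 0"
proof -
  have sym: "transpose L = L" using assms by (simp add: Lset_def)
  define u where "u = (\<chi> i. Re (w$i))"
  define v where "v = (\<chi> i. Im (w$i))"
  have Re_z: "Re (z$i) = (L *v u)$i" and Im_z: "Im (z$i) = (L *v v)$i" for i
    by (simp_all add: z_def u_def v_def cmatrix_def matrix_vector_mult_def Re_sum Im_sum)
  have zz: "cinner z z = complex_of_real ((L *v u) \<bullet> (L *v u) + (L *v v) \<bullet> (L *v v))"
    unfolding cinner_def inner_vec_def
    by (simp add: complex_eq_iff Re_sum Im_sum Re_z Im_z sum.distrib power2_eq_square)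
  have Re_zw: "Re (cinner z w) = (L *v u) \<bullet> u + (L *v v) \<bullet> v"
    unfolding cinner_def inner_vec_def
    by (simp add: Re_sum Re_z Im_z sum.distrib u_def v_def)
  have "Im (cinner z w) = (L *v u) \<bullet> v - (L *v v) \<bullet> u"
    unfolding cinner_def inner_vec_def
    by (simp add: Im_sum Re_z Im_z sum_subtractf u_def v_def algebra_simps)
  also have "\<dots> = 0"
    using psd_form_symmetric[OF sym, of v u] by (simp add: inner_commute)
  finally have "Im (cinner z w) = 0" .
  moreover have "(L *v u) \<bullet> (L *v u) \<le> (L *v u) \<bullet> u" "(L *v v) \<bullet> (L *v v) \<le> (L *v v) \<bullet> v"
    using Lset_square_le[OF assms(1)] by (simp_all add: inner_commute)
  ultimately show ?thesis using zz Re_zw by simp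
qed

lemma norm_axis: "norm (axis i (x::'a::real_inner)) = norm x"
  by (simp add: norm_eq_sqrt_inner inner_axis_axis)

lemma matrix_entry_eq_mult_axis: "A $ k $ j = (A *v axis j 1) $ k"
  by (simp add: matrix_vector_mult_def axis_def if_distrib cong: if_cong)

lemma norm_scale_components_le:
  fixes x :: "complex^'n"
  assumes "\<And>i. cmod (q i) \<le> K"
  shows "norm (\<chi> i. q i * x$i) \<le> K * norm x"
proof -
  have K_nonneg: "0 \<le> K" using order_trans[OF norm_ge_zero assms] .
  have "norm (\<chi> i. q i * x$i) = L2_set (\<lambda>i. cmod (q i) * cmod (x$i)) UNIV"
    by (simp add: norm_vec_def norm_mult)
  also have "\<dots> \<le> L2_set (\<lambda>i. K * cmod (x$i)) UNIV"
    by (rule L2_set_mono) (simp_all add: assms mult_right_mono)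
  also have "\<dots> = K * norm x"
    by (simp add: norm_vec_def L2_set_right_distrib[OF K_nonneg])
  finally show ?thesis .
qed

section \<open>Bounds on the right half plane\<close>

lemma Hinf_boundE:
  assumes "Hinf g"
  obtains M where "\<And>s. s \<in> RHP \<Longrightarrow> cmod (g s) \<le> M"
  using assms unfolding Hinf_def bounded_iff by auto

lemma ESPR_Re_bounded_below:
  assumes "ESPR g"
  shows "\<exists>e>0. \<forall>s\<in>RHP. e \<le> Re (g s)"
  using assms by (auto simp: ESPR_def PR_def)

text \<open>Near \<open>0\<close>, \<open>h/s = g/(s + p)\<close> with \<open>g = h (1 + p/s)\<close> bounded and \<open>s + p\<close> close to
  \<open>p(0) \<noteq> 0\<close>; away from \<open>0\<close>, \<open>|h/s| \<le> |h|/|s|\<close>.\<close>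

lemma Pclass_div_boundE:
  assumes "Hinf h" and "Pclass h p"
  obtains H where "\<And>s. s \<in> RHP \<Longrightarrow> cmod (h s / s) \<le> H"
proof -
  obtain M where M: "\<And>s. s \<in> RHP \<Longrightarrow> cmod (h s) \<le> M"
    using Hinf_boundE[OF assms(1)] by blast
  have "Hinf (\<lambda>s. h s * (1 + p s / s))"
    using assms(2) by (simp add: Pclass_def ESPR_def A0_def)
  then obtain G where G: "\<And>s. s \<in> RHP \<Longrightarrow> cmod (h s * (1 + p s / s)) \<le> G"
    by (rule Hinf_boundE) blast
  obtain c where "c \<noteq> 0" and lim: "(p \<longlongrightarrow> c) (at 0 within RHP)"
    using assms(2) by (auto simp: Pclass_def)
  define r where "r = cmod c"
  have r_pos: "r > 0" using \<open>c \<noteq> 0\<close> by (simp add: r_def)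
  obtain d where "d > 0" and near_c: "\<And>s. s \<in> RHP \<Longrightarrow> s \<noteq> 0 \<Longrightarrow> cmod s < d \<Longrightarrow> cmod (p s - c) < r/2"
    using tendstoD[OF lim, of "r/2"] r_pos by (auto simp: eventually_at dist_norm)
  define \<delta> where "\<delta> = min d (r/4)"
  have \<delta>_pos: "\<delta> > 0" using \<open>d > 0\<close> r_pos by (simp add: \<delta>_def)
  show thesis
  proof (rule that[of "max (4*G/r) (M/\<delta>)"])
    fix s assume s: "s \<in> RHP"
    then have "s \<noteq> 0" by (auto simp: RHP_def)
    show "cmod (h s / s) \<le> max (4*G/r) (M/\<delta>)"
    proof (cases "cmod s < \<delta>")
      case True
      have "r \<le> cmod (s + p s) + cmod (p s - c) + cmod s"
        unfolding r_def
        using norm_triangle_ineq4[of "s + p s" "p s - c"] norm_triangle_ineq4[of "s + p s - (p s - c)" s]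
        by simp
      moreover have "cmod (p s - c) < r/2" using near_c[OF s \<open>s \<noteq> 0\<close>] True by (simp add: \<delta>_def)
      moreover have "cmod s < r/4" using True by (simp add: \<delta>_def)
      ultimately have "r/4 \<le> cmod (s + p s)" by linarith
      have "cmod (h s / s) * cmod (s + p s) \<le> G"
        using G[OF s] \<open>s \<noteq> 0\<close> by (simp add: norm_mult[symmetric] field_simps)
      then have "cmod (h s / s) * (r/4) \<le> G"
        by (meson \<open>r/4 \<le> cmod (s + p s)\<close> mult_left_mono norm_ge_zero order_trans)
      then have "cmod (h s / s) \<le> 4*G/r" using r_pos by (simp add: field_simps)
      then show ?thesis by simp
    next
      case False
      have "cmod (h s / s) = cmod (h s) / cmod s" by (simp add: norm_divide)
      also have "\<dots> \<le> M / \<delta>"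
        using M[OF s] False \<delta>_pos order_trans[OF norm_ge_zero M[OF s]] by (intro frac_le) simp_all
      finally show ?thesis by simp
    qed
  qed
qed

lemma Pclass_family_boundE:
  fixes p :: "'n::finite \<Rightarrow> complex \<Rightarrow> complex"
  assumes "\<forall>i. Pclass h (p i)"
  obtains K where "\<And>i s. s \<in> RHP \<Longrightarrow> cmod (p i s) \<le> K"
proof -
  have "bounded (\<Union>i. p i ` RHP)"
    using assms by (intro bounded_UN) (auto simp: Pclass_def Hinf_def)
  then obtain K where "\<forall>z\<in>(\<Union>i. p i ` RHP). cmod z \<le> K"
    unfolding bounded_iff by blast
  then show thesis using that by blast
qed

lemma Pclass_uniform_boundsE:
  fixes p :: "'n::finite \<Rightarrow> complex \<Rightarrow> complex"
  assumes "A0 h" and "\<forall>i. Pclass h (p i)"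
  obtains M H K e where "e > 0"
    and "\<And>s. s \<in> RHP \<Longrightarrow> cmod (h s) \<le> M"
    and "\<And>s. s \<in> RHP \<Longrightarrow> cmod (h s / s) \<le> H"
    and "\<And>i s. s \<in> RHP \<Longrightarrow> cmod (p i s) \<le> K"
    and "\<And>i s. s \<in> RHP \<Longrightarrow> e \<le> Re (h s * (1 + p i s / s))"
proof -
  have "Hinf h" using assms(1) by (simp add: A0_def)
  obtain M where "\<And>s. s \<in> RHP \<Longrightarrow> cmod (h s) \<le> M"
    using Hinf_boundE[OF \<open>Hinf h\<close>] by blast
  moreover obtain H where "\<And>s. s \<in> RHP \<Longrightarrow> cmod (h s / s) \<le> H"
    using Pclass_div_boundE[OF \<open>Hinf h\<close>, of "p undefined"] assms(2) by blast
  moreover obtain K where "\<And>i s. s \<in> RHP \<Longrightarrow> cmod (p i s) \<le> K"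
    using Pclass_family_boundE[OF assms(2)] by blast
  moreover have "\<forall>i. \<exists>e>0. \<forall>s\<in>RHP. e \<le> Re (h s * (1 + p i s / s))"
    using assms(2) ESPR_Re_bounded_below unfolding Pclass_def by blast
  then obtain ef where ef_pos: "\<And>i. ef i > 0"
    and ef: "\<And>i s. s \<in> RHP \<Longrightarrow> ef i \<le> Re (h s * (1 + p i s / s))"
    by metis
  have "Min (range ef) > 0" using ef_pos by (subst Min_gr_iff) auto
  moreover have "Min (range ef) \<le> Re (h s * (1 + p i s / s))" if "s \<in> RHP" for i s
    by (rule order_trans[OF Min_le ef[OF that]]) auto
  ultimately show thesis using that by blast
qed

section \<open>The a priori estimate\<close>

lemma feedback_energy_identity:
  fixes x a b :: "complex^'n" and q :: "'n \<Rightarrow> complex"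
  assumes "s \<noteq> 0"
  defines "y \<equiv> \<chi> i. q i * x$i" and "d \<equiv> x - b" and "z \<equiv> s *s (x - b)"
  shows "(\<Sum>i\<in>UNIV. g * (1 + q i / s) * (cnj (x$i) * x$i)) =
      g * cinner x b + g * cinner b d + g/s * cinner b y + g/s * cinner d a
      + g * (cinner z z - cinner z (a - y)) / (s * cnj s)" (is "_ = ?rhs")
proof -
  have "g * (1 + q i / s) * (cnj (x$i) * x$i) =
      g * (cnj (x$i) * b$i) + g * (cnj (b$i) * d$i) + g/s * (cnj (b$i) * y$i)
      + g/s * (cnj (d$i) * a$i) + g * (cnj (z$i) * z$i - cnj (z$i) * (a - y)$i) / (s * cnj s)" for i
    using assms(1) by (simp add: y_def d_def z_def field_simps)
  then have "(\<Sum>i\<in>UNIV. g * (1 + q i / s) * (cnj (x$i) * x$i)) =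
      (\<Sum>i\<in>UNIV. g * (cnj (x$i) * b$i) + g * (cnj (b$i) * d$i) + g/s * (cnj (b$i) * y$i)
      + g/s * (cnj (d$i) * a$i) + g * (cnj (z$i) * z$i - cnj (z$i) * (a - y)$i) / (s * cnj s))"
    by (intro sum.cong) simp_all
  also have "\<dots> = ?rhs"
    by (simp add: cinner_def sum.distrib sum_distrib_left sum_divide_distrib sum_subtractf
        right_diff_distrib diff_divide_distrib)
  finally show ?thesis .
qed

lemma weighted_norm_sq_le:
  fixes x :: "complex^'n"
  assumes "\<And>i. e \<le> Re (c i)"
  shows "e * (norm x)^2 \<le> Re (\<Sum>i\<in>UNIV. c i * (cnj (x$i) * x$i))"
proof -
  have "cnj (x$i) * x$i = complex_of_real ((cmod (x$i))^2)" for i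
    by (metis complex_norm_square mult.commute)
  then have "Re (c i * (cnj (x$i) * x$i)) = Re (c i) * (cmod (x$i))^2" for i
    by simp
  then have "Re (\<Sum>i\<in>UNIV. c i * (cnj (x$i) * x$i)) = (\<Sum>i\<in>UNIV. Re (c i) * (cmod (x$i))^2)"
    by (simp only: Re_sum)
  moreover have "e * (norm x)^2 = (\<Sum>i\<in>UNIV. e * (cmod (x$i))^2)"
    by (simp add: norm_vec_def L2_set_def sum_nonneg sum_distrib_left)
  moreover have "(\<Sum>i\<in>UNIV. e * (cmod (x$i))^2) \<le> (\<Sum>i\<in>UNIV. Re (c i) * (cmod (x$i))^2)"
    by (intro sum_mono mult_right_mono assms) simp
  ultimately show ?thesis by simp
qed

lemma Re_mult_real_nonpos_div_le_0:
  assumes "0 \<le> Re g" and "Im Q = 0" and "Re Q \<le> 0"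
  shows "Re (g * Q / (s * cnj s)) \<le> 0"
proof -
  have "Q = complex_of_real (Re Q)" using assms(2) by (simp add: complex_eq_iff)
  moreover have "s * cnj s = complex_of_real ((cmod s)^2)" by (simp add: complex_norm_square[symmetric])
  ultimately have "g * Q / (s * cnj s) = complex_of_real (Re Q / (cmod s)^2) * g"
    by (metis mult.commute of_real_divide times_divide_eq_right)
  then show ?thesis
    using assms by (simp add: divide_nonpos_nonneg mult_nonpos_nonneg)
qed

lemma Re_mult_le:
  assumes "cmod z \<le> A" and "cmod w \<le> B"
  shows "Re (z * w) \<le> A * B"
proof -
  have "Re (z * w) \<le> cmod z * cmod w" by (metis complex_Re_le_cmod norm_mult)
  also have "\<dots> \<le> A * B" using assms by (intro mult_mono) (auto intro: order_trans[OF norm_ge_zero])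
  finally show ?thesis .
qed

lemma le_linear_if_sq_le:
  fixes X T C e :: real
  assumes "e > 0" "C \<ge> 0" "X \<ge> 0" "T \<ge> 0" and "e * X^2 \<le> C * (X + T) * T"
  shows "X \<le> (1 + 2*C/e) * T"
proof (cases "X \<le> T")
  case True
  moreover have "0 \<le> 2*C/e * T" using assms by simp
  ultimately show ?thesis by (simp add: algebra_simps)
next
  case False
  then have "C * (X + T) * T \<le> C * (2*X) * T"
    using assms by (intro mult_right_mono mult_left_mono) auto
  with assms(5) have "e * X * X \<le> 2*C*T * X" by (simp add: algebra_simps power2_eq_square)
  then have "e * X \<le> 2*C*T" using False assms(4) by simp
  then have "X \<le> 2*C*T/e" using assms(1) by (simp add: field_simps)
  also have "\<dots> \<le> (1 + 2*C/e) * T" using assms by (simp add: field_simps)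
  finally show ?thesis .
qed

lemma feedback_solution_bound:
  fixes L :: "real^'n^'n" and x a b :: "complex^'n" and q :: "'n \<Rightarrow> complex"
  assumes "L \<in> Lset" and "s \<noteq> 0"
    and M: "cmod g \<le> M" and H: "cmod (g/s) \<le> H" and K: "\<And>i. cmod (q i) \<le> K"
    and coercive: "\<And>i. e \<le> Re (g * (1 + q i / s))" and "e > 0" and "0 \<le> Re g"
    and feedback: "s *s (x - b) = cmatrix L *v (a - (\<chi> i. q i * x$i))"
  shows "norm x \<le> (1 + 2*(2*M + H*K + H)/e) * (norm a + norm b)"
proof -
  define y where "y = (\<chi> i. q i * x$i)"
  define d where "d = x - b"
  define Q where "Q = cinner (s *s d) (s *s d) - cinner (s *s d) (a - y)"
  let ?X = "norm x" and ?T = "norm a + norm b"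
  have M0: "0 \<le> M" and H0: "0 \<le> H" and K0: "0 \<le> K"
    using order_trans[OF norm_ge_zero M] order_trans[OF norm_ge_zero H] order_trans[OF norm_ge_zero K]
    by simp_all
  have "Im Q = 0 \<and> Re Q \<le> 0"
    unfolding Q_def using cinner_Lset_real_nonpos[OF assms(1)] feedback by (simp add: y_def d_def)
  then have Q_term: "Re (g * Q / (s * cnj s)) \<le> 0"
    using Re_mult_real_nonpos_div_le_0[OF \<open>0 \<le> Re g\<close>] by simp
  let ?P = "(?X + ?T) * ?T"
  have "norm x \<le> ?X + ?T" "norm a \<le> ?T" "norm b \<le> ?T" "0 \<le> ?T" by simp_all
  moreover have "norm d \<le> ?X + ?T"
    using norm_triangle_ineq4[of x b] norm_ge_zero[of a] unfolding d_def by linarith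
  ultimately have norms: "norm x * norm b \<le> ?P" "norm d * norm b \<le> ?P" "norm d * norm a \<le> ?P"
    by (simp_all add: mult_mono')
  have "norm y \<le> K * ?X"
    unfolding y_def by (rule norm_scale_components_le[OF K])
  have "cmod (cinner b d) \<le> norm d * norm b" using norm_cinner_le[of b d] by (simp only: mult.commute)
  then have "cmod (cinner x b) \<le> ?P" "cmod (cinner b d) \<le> ?P" "cmod (cinner d a) \<le> ?P"
    using order_trans[OF norm_cinner_le norms(1)] order_trans[OF _ norms(2)]
      order_trans[OF norm_cinner_le norms(3)]
    by simp_all
  moreover have "cmod (cinner b y) \<le> K * ?P"
  proof -
    have "cmod (cinner b y) \<le> norm b * (K * ?X)"
      using norm_cinner_le[of b y] \<open>norm y \<le> K * ?X\<close> by (meson mult_left_mono norm_ge_zero order_trans)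
    also have "\<dots> = K * (norm x * norm b)" by (simp add: ac_simps)
    also have "\<dots> \<le> K * ?P" by (rule mult_left_mono[OF norms(1) K0])
    finally show ?thesis .
  qed
  ultimately have terms: "Re (g * cinner x b) + Re (g * cinner b d) + Re (g/s * cinner b y) + Re (g/s * cinner d a)
      \<le> M * ?P + M * ?P + H * (K * ?P) + H * ?P"
    by (intro add_mono Re_mult_le M H)
  have energy: "(\<Sum>i\<in>UNIV. g * (1 + q i / s) * (cnj (x$i) * x$i)) =
      g * cinner x b + g * cinner b d + g/s * cinner b y + g/s * cinner d a + g * Q / (s * cnj s)"
    unfolding Q_def y_def d_def by (rule feedback_energy_identity[OF \<open>s \<noteq> 0\<close>])
  have "e * ?X^2 \<le> Re (\<Sum>i\<in>UNIV. g * (1 + q i / s) * (cnj (x$i) * x$i))"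
    by (rule weighted_norm_sq_le[OF coercive])
  also have "\<dots> = Re (g * cinner x b) + Re (g * cinner b d) + Re (g/s * cinner b y)
      + Re (g/s * cinner d a) + Re (g * Q / (s * cnj s))"
    by (simp only: energy plus_complex.sel)
  also have "\<dots> \<le> Re (g * cinner x b) + Re (g * cinner b d) + Re (g/s * cinner b y) + Re (g/s * cinner d a)"
    using Q_term by linarith
  also have "\<dots> \<le> (2*M + H*K + H) * (?X + ?T) * ?T"
    using terms by (simp add: algebra_simps)
  finally show ?thesis
    using M0 H0 K0 by (intro le_linear_if_sq_le \<open>e > 0\<close>) auto
qed

section \<open>Holomorphic matrix functions\<close>

lemma matrix_inv_right:
  fixes A :: "'a::semiring_1^'n^'m"
  assumes "invertible A"
  shows "A ** matrix_inv A = mat 1"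
  using someI_ex[OF assms[unfolded invertible_def]] by (simp add: matrix_inv_def)

lemma holomorphic_on_det:
  fixes F :: "complex \<Rightarrow> complex^'n^'n"
  assumes "\<And>i j. (\<lambda>s. F s $ i $ j) holomorphic_on S"
  shows "(\<lambda>s. det (F s)) holomorphic_on S"
  unfolding det_def
  by (intro holomorphic_on_sum holomorphic_on_prod holomorphic_on_mult holomorphic_on_const assms)

lemma holomorphic_on_matrix_mult:
  fixes A :: "complex \<Rightarrow> complex^'n^'m" and B :: "complex \<Rightarrow> complex^'k^'n"
  assumes "\<And>i j. (\<lambda>s. A s $ i $ j) holomorphic_on S" and "\<And>i j. (\<lambda>s. B s $ i $ j) holomorphic_on S"
  shows "(\<lambda>s. (A s ** B s) $ i $ j) holomorphic_on S"
  unfolding matrix_matrix_mult_def by (simp add: holomorphic_on_sum holomorphic_on_mult assms)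

text \<open>By Cramer's rule the entries of the inverse are quotients of determinants.\<close>

lemma holomorphic_on_matrix_inv:
  fixes F :: "complex \<Rightarrow> complex^'n^'n"
  assumes holo: "\<And>i j. (\<lambda>s. F s $ i $ j) holomorphic_on S"
    and inv: "\<And>s. s \<in> S \<Longrightarrow> invertible (F s)"
  shows "(\<lambda>s. matrix_inv (F s) $ i $ j) holomorphic_on S"
proof -
  let ?C = "\<lambda>s. \<chi> k l. if l = i then axis j 1 $ k else F s $ k $ l"
  have "(\<lambda>s. ?C s $ k $ l) holomorphic_on S" for k l
    by (cases "l = i") (simp_all add: holo)
  then have "(\<lambda>s. det (?C s) / det (F s)) holomorphic_on S"
    using inv by (intro holomorphic_intros holomorphic_on_det) (auto simp: holo invertible_det_nz)
  moreover have "det (?C s) / det (F s) = matrix_inv (F s) $ i $ j" if "s \<in> S" for s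
  proof -
    have "F s *v (matrix_inv (F s) *v axis j 1) = axis j 1"
      using matrix_inv_right[OF inv[OF that]] by (simp add: matrix_vector_mul_assoc)
    then show ?thesis
      using cramer[of "F s"] inv[OF that] by (simp add: invertible_det_nz matrix_entry_eq_mult_axis[of _ i j])
  qed
  ultimately show ?thesis by (rule holomorphic_transform)
qed

lemma Lc_over_s_mult_vec: "Lc_over_s L s *v v = inverse s *s (cmatrix L *v v)"
  by (simp add: Lc_over_s_def cmatrix_def matrix_vector_mult_def vec_eq_iff sum_distrib_left field_simps)

lemma diagP_mult_vec: "diagP p s *v x = (\<chi> i. p i s * x$i)"
proof -
  have "(if i = j then p i s else 0) * x$j = (if i = j then p i s * x$j else 0)" for i j
    by simp
  then show ?thesis by (simp add: diagP_def matrix_vector_mult_def vec_eq_iff)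
qed

lemma retdiff_mult_vec: "retdiff L p s *v x = x + Lc_over_s L s *v (\<chi> i. p i s * x$i)"
  by (simp add: retdiff_def matrix_vector_mult_add_rdistrib matrix_vector_mul_assoc[symmetric]
      diagP_mult_vec)

lemma retdiff_eq_feedback:
  assumes "s \<noteq> 0" and "retdiff L p s *v x = Lc_over_s L s *v a + b"
  shows "s *s (x - b) = cmatrix L *v (a - (\<chi> i. p i s * x$i))"
proof -
  have "x - b = inverse s *s (cmatrix L *v (a - (\<chi> i. p i s * x$i)))"
    using assms(2) by (simp add: retdiff_mult_vec Lc_over_s_mult_vec matrix_vector_mult_diff_distrib
        vector_ssub_ldistrib algebra_simps)
  then show ?thesis using assms(1) by simp
qed

lemma retdiff_solution_boundE:
  fixes p :: "'n::finite \<Rightarrow> complex \<Rightarrow> complex" and L :: "real^'n^'n"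
  assumes "PR h" and "A0 h" and "\<forall>i. Pclass h (p i)" and "L \<in> Lset"
  obtains C where "\<And>s x a b. s \<in> RHP \<Longrightarrow> retdiff L p s *v x = Lc_over_s L s *v a + b \<Longrightarrow>
    norm x \<le> C * (norm a + norm b)"
proof -
  obtain M H K e where "e > 0"
    and M: "\<And>s. s \<in> RHP \<Longrightarrow> cmod (h s) \<le> M"
    and H: "\<And>s. s \<in> RHP \<Longrightarrow> cmod (h s / s) \<le> H"
    and K: "\<And>i s. s \<in> RHP \<Longrightarrow> cmod (p i s) \<le> K"
    and coercive: "\<And>i s. s \<in> RHP \<Longrightarrow> e \<le> Re (h s * (1 + p i s / s))"
    using Pclass_uniform_boundsE[OF assms(2,3)] by metis
  show thesis
  proof (rule that)
    fix s x a b
    assume s: "s \<in> RHP" and eq: "retdiff L p s *v x = Lc_over_s L s *v a + b"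
    have "s \<noteq> 0" and "0 \<le> Re (h s)" using s assms(1) by (auto simp: RHP_def PR_def)
    then show "norm x \<le> (1 + 2*(2*M + H*K + H)/e) * (norm a + norm b)"
      using retdiff_eq_feedback[OF _ eq] M[OF s] H[OF s] K[OF s] coercive[OF s] \<open>e > 0\<close>
      by (intro feedback_solution_bound[OF assms(4)])
  qed
qed

definition vstack_P_I :: "('n \<Rightarrow> complex \<Rightarrow> complex) \<Rightarrow> complex \<Rightarrow> complex^'n^('n+'n)" where
  "vstack_P_I p s =
     (\<chi> k j. case k of Inl i \<Rightarrow> diagP p s $ i $ j | Inr i \<Rightarrow> (mat 1 :: complex^'n^'n) $ i $ j)"

definition hstack_Ls_I :: "real^'n^'n \<Rightarrow> complex \<Rightarrow> complex^('n+'n)^'n" where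
  "hstack_Ls_I L s =
     (\<chi> i k. case k of Inl j \<Rightarrow> Lc_over_s L s $ i $ j | Inr j \<Rightarrow> (mat 1 :: complex^'n^'n) $ i $ j)"

lemma closed_loop_eq: "closed_loop L p s = vstack_P_I p s ** matrix_inv (retdiff L p s) ** hstack_Ls_I L s"
  unfolding closed_loop_def vstack_P_I_def hstack_Ls_I_def ..

lemma vstack_P_I_mult_vec_nth:
  "(vstack_P_I p s *v x) $ Inl i = p i s * x$i" "(vstack_P_I p s *v x) $ Inr i = x$i"
proof -
  have "(vstack_P_I p s *v x) $ Inl i = (diagP p s *v x) $ i"
    "(vstack_P_I p s *v x) $ Inr i = (mat 1 *v x) $ i"
    by (simp_all add: vstack_P_I_def matrix_vector_mult_def)
  then show "(vstack_P_I p s *v x) $ Inl i = p i s * x$i" "(vstack_P_I p s *v x) $ Inr i = x$i"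
    by (simp_all add: diagP_mult_vec)
qed

lemma sum_UNIV_sum_type:
  fixes f :: "'a::finite + 'b::finite \<Rightarrow> 'c::comm_monoid_add"
  shows "(\<Sum>k\<in>UNIV. f k) = (\<Sum>i\<in>UNIV. f (Inl i)) + (\<Sum>j\<in>UNIV. f (Inr j))"
  using sum.Plus[where A = UNIV and B = UNIV and g = f] by (simp add: comp_def)

lemma hstack_Ls_I_mult_vec:
  "hstack_Ls_I L s *v v = Lc_over_s L s *v (\<chi> j. v $ Inl j) + mat 1 *v (\<chi> j. v $ Inr j)"
  by (simp add: hstack_Ls_I_def matrix_vector_mult_def vec_eq_iff sum_UNIV_sum_type)

lemma vstack_P_I_mult_vec_nth_le:
  assumes "\<And>i. cmod (p i s) \<le> K"
  shows "cmod ((vstack_P_I p s *v x) $ k) \<le> (K + 1) * norm x"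
proof -
  have K0: "0 \<le> K" using order_trans[OF norm_ge_zero assms] .
  show ?thesis
  proof (cases k)
    case (Inl i)
    have "cmod (p i s * x$i) \<le> K * norm x"
      unfolding norm_mult by (intro mult_mono assms Finite_Cartesian_Product.norm_nth_le K0 norm_ge_zero)
    also have "\<dots> \<le> (K + 1) * norm x" by (simp add: algebra_simps)
    finally show ?thesis using Inl by (simp only: vstack_P_I_mult_vec_nth)
  next
    case (Inr i)
    have "cmod (x$i) \<le> norm x" by (rule Finite_Cartesian_Product.norm_nth_le)
    also have "\<dots> \<le> (K + 1) * norm x" using K0 by (simp add: algebra_simps)
    finally show ?thesis using Inr by (simp only: vstack_P_I_mult_vec_nth)
  qed
qed

lemma norm_axis_Inl_Inr:
  "norm (\<chi> j. axis k (1::complex) $ Inl j) + norm (\<chi> j. axis k (1::complex) $ Inr j) = 1"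
proof (cases k)
  case (Inl i)
  then have "(\<chi> j. axis k (1::complex) $ Inl j) = axis i 1" "(\<chi> j. axis k (1::complex) $ Inr j) = 0"
    by (simp_all add: vec_eq_iff axis_def)
  then show ?thesis by (simp add: norm_axis)
next
  case (Inr i)
  then have "(\<chi> j. axis k (1::complex) $ Inl j) = 0" "(\<chi> j. axis k (1::complex) $ Inr j) = axis i 1"
    by (simp_all add: vec_eq_iff axis_def)
  then show ?thesis by (simp add: norm_axis)
qed

lemma invertible_retdiff_if_bound:
  assumes "\<And>x a b. retdiff L p s *v x = Lc_over_s L s *v a + b \<Longrightarrow> norm x \<le> C * (norm a + norm b)"
  shows "invertible (retdiff L p s)"
proof -
  have "x = 0" if "retdiff L p s *v x = 0" for x
    using assms[of x 0 0] that by simp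
  then show ?thesis
    by (simp add: invertible_left_inverse matrix_left_invertible_ker)
qed

lemma closed_loop_entry_le:
  assumes inv: "invertible (retdiff L p s)"
    and bound: "\<And>x a b. retdiff L p s *v x = Lc_over_s L s *v a + b \<Longrightarrow> norm x \<le> C * (norm a + norm b)"
    and K: "\<And>i. cmod (p i s) \<le> K"
  shows "cmod (closed_loop L p s $ k $ j) \<le> (K + 1) * C"
proof -
  define x where "x = matrix_inv (retdiff L p s) *v (hstack_Ls_I L s *v axis j 1)"
  have "retdiff L p s *v x = hstack_Ls_I L s *v axis j 1"
    unfolding x_def by (metis matrix_inv_right[OF inv] matrix_vector_mul_assoc matrix_vector_mul_lid)
  then have "retdiff L p s *v x = Lc_over_s L s *v (\<chi> i. axis j 1 $ Inl i) + (\<chi> i. axis j 1 $ Inr i)"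
    by (simp add: hstack_Ls_I_mult_vec)
  then have "norm x \<le> C"
    using bound norm_axis_Inl_Inr[of j] by fastforce
  moreover have "0 \<le> K + 1" using order_trans[OF norm_ge_zero K] by simp
  ultimately have "cmod ((vstack_P_I p s *v x) $ k) \<le> (K + 1) * C"
    using vstack_P_I_mult_vec_nth_le[of p s K x k, OF K] by (meson mult_left_mono order_trans)
  moreover have "closed_loop L p s $ k $ j = (vstack_P_I p s *v x) $ k"
    by (simp add: closed_loop_eq x_def matrix_entry_eq_mult_axis[of _ k j] matrix_vector_mul_assoc
        matrix_mul_assoc)
  ultimately show ?thesis by simp
qed

lemma diagP_holomorphic:
  assumes "\<And>i. p i holomorphic_on S"
  shows "(\<lambda>s. diagP p s $ i $ j) holomorphic_on S"
  by (cases "i = j") (simp_all add: diagP_def assms)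

lemma Lc_over_s_holomorphic: "(\<lambda>s. Lc_over_s L s $ i $ j) holomorphic_on RHP"
  by (auto simp: Lc_over_s_def RHP_def intro!: holomorphic_intros)

lemma retdiff_holomorphic:
  assumes "\<And>i. p i holomorphic_on RHP"
  shows "(\<lambda>s. retdiff L p s $ i $ j) holomorphic_on RHP"
  unfolding retdiff_def
  by (simp add: holomorphic_on_add holomorphic_on_matrix_mult Lc_over_s_holomorphic diagP_holomorphic assms)

lemma closed_loop_holomorphic:
  assumes "\<And>i. p i holomorphic_on RHP" and "\<And>s. s \<in> RHP \<Longrightarrow> invertible (retdiff L p s)"
  shows "(\<lambda>s. closed_loop L p s $ k $ j) holomorphic_on RHP"
proof -
  have "(\<lambda>s. vstack_P_I p s $ k $ j) holomorphic_on RHP" for k j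
    by (cases k) (simp_all add: vstack_P_I_def diagP_holomorphic assms(1))
  moreover have "(\<lambda>s. hstack_Ls_I L s $ i $ k) holomorphic_on RHP" for i k
    by (cases k) (simp_all add: hstack_Ls_I_def Lc_over_s_holomorphic)
  ultimately show ?thesis
    unfolding closed_loop_eq
    by (intro holomorphic_on_matrix_mult holomorphic_on_matrix_inv retdiff_holomorphic assms)
qed

theorem theorem1:
  fixes h :: "complex \<Rightarrow> complex"
    and p :: "'n::finite \<Rightarrow> complex \<Rightarrow> complex"
    and L :: "real^'n^'n"
  assumes "PR h" and "A0 h"
    and "\<forall>i. Pclass h (p i)"
    and "L \<in> Lset"
  shows "(\<forall>s\<in>RHP. invertible (retdiff L p s)) \<and> Hinf_mat (closed_loop L p)"
proof -
  obtain C where bound: "\<And>s x a b. s \<in> RHP \<Longrightarrow> retdiff L p s *v x = Lc_over_s L s *v a + b \<Longrightarrow>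
      norm x \<le> C * (norm a + norm b)"
    using retdiff_solution_boundE[OF assms] by blast
  obtain K where K: "\<And>i s. s \<in> RHP \<Longrightarrow> cmod (p i s) \<le> K"
    using Pclass_family_boundE[OF assms(3)] by blast
  have inv: "invertible (retdiff L p s)" if "s \<in> RHP" for s
    using bound[OF that] by (rule invertible_retdiff_if_bound)
  have holo: "(\<lambda>s. closed_loop L p s $ k $ j) holomorphic_on RHP" for k j
    using assms(3) inv by (intro closed_loop_holomorphic) (auto simp: Pclass_def Hinf_def)
  have "cmod (closed_loop L p s $ k $ j) \<le> (K + 1) * C" if "s \<in> RHP" for s k j
    using closed_loop_entry_le[OF inv[OF that] bound[OF that] K[OF that]] .
  then have "bounded ((\<lambda>s. closed_loop L p s $ k $ j) ` RHP)" for k j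
    unfolding bounded_iff by blast
  with holo inv show ?thesis
    by (simp add: Hinf_mat_def Hinf_def)
qed

end
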